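(* Let $G=\mathrm{SL}_2(\mathbb{R})$ act continuously (the map $G\times X\to X$ is continuous) by isometries on a metric space $X$, and let $x_0\in X$. Then either $x_0$ is fixed by all of $G$, or the stabilizer $G_{x_0}$ is compact. *)

theory Defs
  imports "HOL-Analysis.Analysis"
begin

text \<open>The group SL_2(R), realised as the set of real 2x2 matrices of determinant 1,
  with matrix multiplication as group law and the subspace topology of real^2^2.\<close>
definition SL2 :: "(real^2^2) set" where
  "SL2 = {A. det A = 1}"

definition continuous_isometric_SL2_action :: "(real^2^2 \<Rightarrow> 'x::metric_space \<Rightarrow> 'x) \<Rightarrow> bool" where
  "continuous_isometric_SL2_action act \<longleftrightarrow>
     (\<forall>x. act (mat 1) x = x) \<and>
     (\<forall>g\<in>SL2. \<forall>h\<in>SL2. \<forall>x. act (g ** h) x = act g (act h x)) \<and>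
     (\<forall>g\<in>SL2. \<forall>x y. dist (act g x) (act g y) = dist x y) \<and>
     continuous_on (SL2 \<times> UNIV) (\<lambda>(g, x). act g x)"

definition stabilizer :: "(real^2^2 \<Rightarrow> 'x \<Rightarrow> 'x) \<Rightarrow> 'x \<Rightarrow> (real^2^2) set" where
  "stabilizer act x0 = {g \<in> SL2. act g x0 = x0}"

end

theory Submission
  imports Defs
begin

(* Let SL_2(R) act continuously by isometries on X and let x0 be a point
   whose stabilizer is not compact.  The stabilizer is closed, hence unbounded.
   (1) Mautner phenomenon: a point fixed by the lower unipotent group {[1 0; t 1]} is fixed
       by all of SL_2(R).  Conjugating by the lower group shows that [t e; 0 1/t] and [1 e; 0 1]
       displace such a point equally; letting e -> 0 gives the diagonal group, then t -> oo
       gives the upper group, and the Bruhat-type factorisations finish.  By conjugation with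
       a rotation the same holds for every unipotent group  unip p  with unit direction p.
   (2) An element h = [a b; c d] of the stabilizer conjugates  unip p s , for p the normalised
       first (resp. second) row of h, to [1 0; s/r 1] (resp. [1 -s/r; 0 1]) with r the squared
       norm of that row.  As h fixes x0, x0 is displaced by  unip p s  only as much as by
       these nearly trivial matrices.
   (3) Taking stabilizer elements of growing norm and a convergent subsequence of the unit
       directions p, continuity yields a unit vector l with  unip l s  fixing x0 for all s,
       so by (1) x0 is a global fixed point. *)

subsection \<open>2x2 matrices in coordinates\<close>

definition mat2 :: "real \<Rightarrow> real \<Rightarrow> real \<Rightarrow> real \<Rightarrow> real^2^2" where
  "mat2 a b c d = (\<chi> i j. if i = 1 then (if j = 1 then a else b) else (if j = 1 then c else d))"

lemma mat2_nth [simp]: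
  "mat2 a b c d $ 1 $ 1 = a" "mat2 a b c d $ 1 $ 2 = b"
  "mat2 a b c d $ 2 $ 1 = c" "mat2 a b c d $ 2 $ 2 = d"
  by (simp_all add: mat2_def)

lemma mat2_eq_iff: "mat2 a b c d = mat2 a' b' c' d' \<longleftrightarrow> a = a' \<and> b = b' \<and> c = c' \<and> d = d'"
  by (metis mat2_nth)

lemma mat2_cases: obtains a b c d where "A = mat2 a b c d"
proof
  show "A = mat2 (A$1$1) (A$1$2) (A$2$1) (A$2$2)" by (simp add: vec_eq_iff forall_2)
qed

lemma mat2_mult: "mat2 a b c d ** mat2 e f g h = mat2 (a*e+b*g) (a*f+b*h) (c*e+d*g) (c*f+d*h)"
  by (simp add: vec_eq_iff forall_2 matrix_matrix_mult_def sum_2)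

lemma mat1_eq_mat2: "mat 1 = mat2 1 0 0 1"
  by (simp add: vec_eq_iff forall_2 mat_def)

lemma mat2_in_SL2: "mat2 a b c d \<in> SL2 \<longleftrightarrow> a*d - b*c = 1"
  by (simp add: SL2_def det_2)

lemma norm_mat2: "norm (mat2 a b c d) = sqrt (a^2 + b^2 + c^2 + d^2)"
  by (simp add: norm_vec_def L2_set_def sum_2 power2_eq_square add.assoc)

lemma tendsto_mat2:
  assumes "(A \<longlongrightarrow> a) F" "(B \<longlongrightarrow> b) F" "(C \<longlongrightarrow> c) F" "(D \<longlongrightarrow> d) F"
  shows "((\<lambda>n. mat2 (A n) (B n) (C n) (D n)) \<longlongrightarrow> mat2 a b c d) F"
  unfolding mat2_def using assms by (intro tendsto_vec_lambda) (auto intro: tendsto_intros)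

lemma closed_SL2: "closed SL2"
proof -
  have "SL2 = {A::real^2^2. A$1$1 * A$2$2 - A$1$2 * A$2$1 = 1}"
    by (simp add: SL2_def det_2)
  also have "closed \<dots>" by (intro closed_Collect_eq continuous_intros)
  finally show ?thesis .
qed

text \<open>The lower and upper unipotent matrices, and the unipotent matrices  I + s q p^T  with
  q = (-p2, p1) attached to a direction p; for a unit vector p the latter form a conjugate
  of the lower unipotent group by a rotation.\<close>

abbreviation lower :: "real \<Rightarrow> real^2^2" where "lower t \<equiv> mat2 1 0 t 1"
abbreviation upper :: "real \<Rightarrow> real^2^2" where "upper t \<equiv> mat2 1 t 0 1"

definition unip :: "real^2 \<Rightarrow> real \<Rightarrow> real^2^2" where
  "unip p s = mat2 (1 - s * p$1 * p$2) (- s * (p$2)^2) (s * (p$1)^2) (1 + s * p$1 * p$2)"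

lemma unip_in_SL2: "unip p s \<in> SL2"
  by (simp add: unip_def mat2_in_SL2 algebra_simps power2_eq_square)

lemma tendsto_unip: "(P \<longlongrightarrow> p) F \<Longrightarrow> ((\<lambda>n. unip (P n) s) \<longlongrightarrow> unip p s) F"
  unfolding unip_def by (intro tendsto_mat2 tendsto_intros tendsto_vec_nth)

lemma norm_vec2: "norm (p :: real^2) = sqrt ((p$1)^2 + (p$2)^2)"
  by (simp add: norm_vec_def L2_set_def sum_2)

lemma unip_scaled:
  assumes "r > 0"
  shows "unip (vector [a / sqrt r, b / sqrt r]) s
         = mat2 (1 - s*a*b/r) (-s*b^2/r) (s*a^2/r) (1 + s*a*b/r)"
proof -
  have "sqrt r * sqrt r = r" using assms by simp
  then show ?thesis
    using assms unfolding unip_def by (simp add: mat2_eq_iff field_simps power2_eq_square)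
qed

lemma conj_unip_first_row:
  assumes det: "a*d - b*c = 1" and r: "r = a^2 + b^2" "r > 0"
  shows "mat2 a b c d ** unip (vector [a / sqrt r, b / sqrt r]) s ** mat2 d (-b) (-c) a = lower (s/r)"
proof -
  have "r \<noteq> 0" using r(2) by simp
  then show ?thesis
    unfolding unip_scaled[OF r(2)] mat2_mult mat2_eq_iff
    by (simp add: field_simps power2_eq_square) (use det r(1) in algebra)
qed

lemma conj_unip_second_row:
  assumes det: "a*d - b*c = 1" and r: "r = c^2 + d^2" "r > 0"
  shows "mat2 a b c d ** unip (vector [c / sqrt r, d / sqrt r]) s ** mat2 d (-b) (-c) a = upper (-s/r)"
proof -
  have "r \<noteq> 0" using r(2) by simp
  then show ?thesis
    unfolding unip_scaled[OF r(2)] mat2_mult mat2_eq_iff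
    by (simp add: field_simps power2_eq_square) (use det r(1) in algebra)
qed

lemma norm_vector_row:
  assumes "r = a^2 + b^2" "r > 0"
  shows "norm (vector [a / sqrt r, b / sqrt r] :: real^2) = 1"
proof -
  have "(a / sqrt r)^2 + (b / sqrt r)^2 = (a^2 + b^2) / r"
    using assms(2) by (simp add: power_divide add_divide_distrib)
  then show ?thesis using assms(2) unfolding assms(1)[symmetric] by (simp add: norm_vec2)
qed

subsection \<open>Continuous isometric actions\<close>

locale SL2_action =
  fixes act :: "real^2^2 \<Rightarrow> 'x::metric_space \<Rightarrow> 'x"
  assumes action: "continuous_isometric_SL2_action act"
begin

lemma act_one [simp]: "act (mat 1) x = x"
  using action unfolding continuous_isometric_SL2_action_def by blast

lemma act_mult: "g \<in> SL2 \<Longrightarrow> h \<in> SL2 \<Longrightarrow> act (g ** h) x = act g (act h x)"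
  using action unfolding continuous_isometric_SL2_action_def by blast

lemma act_dist: "g \<in> SL2 \<Longrightarrow> dist (act g x) (act g y) = dist x y"
  using action unfolding continuous_isometric_SL2_action_def by blast

lemma act_continuous: "continuous_on (SL2 \<times> UNIV) (\<lambda>(g, x). act g x)"
  using action unfolding continuous_isometric_SL2_action_def by blast

lemma act_mat2_one [simp]: "act (mat2 1 0 0 1) x = x"
  by (simp flip: mat1_eq_mat2)

lemma tendsto_act:
  assumes "\<And>n. M n \<in> SL2" "(M \<longlongrightarrow> L) F" "L \<in> SL2"
  shows "((\<lambda>n. act (M n) y) \<longlongrightarrow> act L y) F"
proof -
  have "((\<lambda>n. (\<lambda>(g, x). act g x) (M n, y)) \<longlongrightarrow> (\<lambda>(g, x). act g x) (L, y)) F"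
    by (rule continuous_on_tendsto_compose[OF act_continuous]) (use assms in \<open>auto intro!: tendsto_intros\<close>)
  then show ?thesis by simp
qed

lemma closed_stabilizer: "closed (stabilizer act x)"
proof -
  have "continuous_on SL2 ((\<lambda>(g, x). act g x) \<circ> (\<lambda>g. (g, x)))"
    by (rule continuous_on_compose) (auto intro!: continuous_intros continuous_on_subset[OF act_continuous])
  then have "continuous_on SL2 (\<lambda>g. act g x)" by (simp add: o_def)
  then show ?thesis
    unfolding stabilizer_def by (rule continuous_closed_preimage_constant[OF _ closed_SL2])
qed

lemma dist_act_conj:
  assumes h: "h \<in> SL2" "h' \<in> SL2" "h' ** h = mat 1" "act h x = x" and v: "v \<in> SL2"
  shows "dist (act (h ** v ** h') x) x = dist (act v x) x"
proof -
  have c: "h ** v ** h' \<in> SL2" using h v by (simp add: SL2_def det_mul)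
  have "act (h ** v ** h') x = act (h ** v ** h') (act h x)" using h by simp
  also have "\<dots> = act ((h ** v ** h') ** h) x" by (rule act_mult[symmetric]) (use c h in auto)
  also have "(h ** v ** h') ** h = h ** v" using h by (simp add: matrix_mul_assoc[symmetric] matrix_mul_rid)
  also have "act \<dots> x = act h (act v x)" by (rule act_mult) (use h v in auto)
  finally have "dist (act (h ** v ** h') x) x = dist (act h (act v x)) (act h x)" using h by simp
  also have "\<dots> = dist (act v x) x" by (rule act_dist) (use h in auto)
  finally show ?thesis .
qed

subsection \<open>The Mautner phenomenon\<close>

text \<open>For a point fixed by the lower unipotent group, the matrices [t e; 0 1/t] and [1 e; 0 1]
  are conjugate under that group, hence displace the point equally.\<close>

lemma lower_fixed_dist_eq:
  assumes fixed: "\<forall>s. act (lower s) y = y" and "e \<noteq> 0" "t \<noteq> 0"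
  shows "dist (act (mat2 t e 0 (1/t)) y) y = dist (act (upper e) y) y"
proof -
  define s where "s = (1/t - 1)/e"
  define s' where "s' = (t - 1)/e"
  have eq: "lower s ** (upper e ** lower s') = mat2 t e 0 (1/t)"
    using assms by (simp add: mat2_mult mat2_eq_iff s_def s'_def field_simps)
  have "act (mat2 t e 0 (1/t)) y = act (lower s) (act (upper e) (act (lower s') y))"
    using act_mult[of "lower s" "upper e ** lower s'"] act_mult[of "upper e" "lower s'"]
    unfolding eq[symmetric] by (simp add: mat2_in_SL2 mat2_mult)
  also have "\<dots> = act (lower s) (act (upper e) y)" using fixed by simp
  finally have "dist (act (mat2 t e 0 (1/t)) y) y = dist (act (lower s) (act (upper e) y)) (act (lower s) y)"
    using fixed by simp
  also have "\<dots> = dist (act (upper e) y) y" by (rule act_dist) (simp add: mat2_in_SL2)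
  finally show ?thesis .
qed

lemma lower_fixed_imp_diag_fixed:
  assumes fixed: "\<forall>s. act (lower s) y = y" and "t \<noteq> 0"
  shows "act (mat2 t 0 0 (1/t)) y = y"
proof -
  let ?e = "\<lambda>n::nat. 1 / (real n + 1)"
  have e0: "?e \<longlonglongrightarrow> 0" using LIMSEQ_inverse_real_of_nat by (simp add: inverse_eq_divide add.commute)
  have "(\<lambda>n. dist (act (mat2 t (?e n) 0 (1/t)) y) y) \<longlonglongrightarrow> dist (act (mat2 t 0 0 (1/t)) y) y"
    by (intro tendsto_intros tendsto_act) (use assms e0 in \<open>auto simp: mat2_in_SL2 intro!: tendsto_mat2\<close>)
  moreover have "(\<lambda>n. dist (act (mat2 t (?e n) 0 (1/t)) y) y) = (\<lambda>n. dist (act (upper (?e n)) y) y)"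
    using lower_fixed_dist_eq[OF fixed _ \<open>t \<noteq> 0\<close>] by (intro ext) simp
  moreover have "(\<lambda>n. dist (act (upper (?e n)) y) y) \<longlonglongrightarrow> dist (act (upper 0) y) y"
    by (intro tendsto_intros tendsto_act) (use e0 in \<open>auto simp: mat2_in_SL2 intro!: tendsto_mat2\<close>)
  ultimately have "dist (act (mat2 t 0 0 (1/t)) y) y = dist (act (upper 0) y) y"
    using LIMSEQ_unique by metis
  then show ?thesis by simp
qed

text \<open>Conjugating [1 e/t; 0 1] by the diagonal matrix [t 0; 0 1/t] shows that y is displaced by
  [1 e; 0 1] as little as by [1 e/t; 0 1]; letting t \<rightarrow> \<infinity> gives a fixed point.\<close>

lemma lower_fixed_imp_upper_fixed:
  assumes fixed: "\<forall>s. act (lower s) y = y"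
  shows "act (upper e) y = y"
proof (cases "e = 0")
  case True then show ?thesis by simp
next
  case False
  let ?t = "\<lambda>n::nat. real n + 1"
  have eq: "dist (act (upper e) y) y = dist (act (upper (e / ?t n)) y) y" for n
  proof -
    let ?D = "mat2 (?t n) 0 0 (1/?t n)"
    have "dist (act (upper e) y) y = dist (act (mat2 (?t n) e 0 (1/?t n)) y) y"
      using lower_fixed_dist_eq[OF fixed False, of "?t n"] by simp
    also have "mat2 (?t n) e 0 (1/?t n) = ?D ** upper (e / ?t n)"
      by (simp add: mat2_mult)
    also have "act \<dots> y = act ?D (act (upper (e / ?t n)) y)"
      by (rule act_mult) (simp_all add: mat2_in_SL2)
    also have "dist \<dots> y = dist (act ?D (act (upper (e / ?t n)) y)) (act ?D y)"
      using lower_fixed_imp_diag_fixed[OF fixed, of "?t n"] by simp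
    also have "\<dots> = dist (act (upper (e / ?t n)) y) y" by (rule act_dist) (simp add: mat2_in_SL2)
    finally show ?thesis .
  qed
  have "(\<lambda>n. e / ?t n) \<longlonglongrightarrow> 0"
    using tendsto_mult[OF tendsto_const[of e] LIMSEQ_inverse_real_of_nat]
    by (simp add: divide_inverse add.commute)
  then have "(\<lambda>n. dist (act (upper (e / ?t n)) y) y) \<longlonglongrightarrow> dist (act (upper 0) y) y"
    by (intro tendsto_intros tendsto_act) (auto simp: mat2_in_SL2 intro!: tendsto_mat2)
  then have "dist (act (upper e) y) y = 0"
    unfolding eq[symmetric] by (simp add: LIMSEQ_const_iff)
  then show ?thesis by simp
qed

text \<open>Every [a b; c d] with c \<noteq> 0 is a product upper \<cdot> lower \<cdot> upper, and multiplying by a lower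
  matrix makes the lower-left entry nonzero; so the two unipotent groups generate SL_2(R).\<close>

lemma lower_fixed_imp_fixed:
  assumes fixed: "\<forall>s. act (lower s) y = y" and g: "g \<in> SL2"
  shows "act g y = y"
proof -
  have bruhat: "act (mat2 a b c d) y = y" if "a*d - b*c = 1" "c \<noteq> 0" for a b c d
  proof -
    have "mat2 a b c d = upper ((a-1)/c) ** (lower c ** upper ((d-1)/c))"
      using that by (simp add: mat2_mult mat2_eq_iff field_simps)
    then have "act (mat2 a b c d) y = act (upper ((a-1)/c)) (act (lower c) (act (upper ((d-1)/c)) y))"
      using act_mult[of "upper ((a-1)/c)" "lower c ** upper ((d-1)/c)"] act_mult[of "lower c" "upper ((d-1)/c)"]
      by (simp add: mat2_in_SL2 mat2_mult)
    then show ?thesis using lower_fixed_imp_upper_fixed fixed by simp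
  qed
  obtain a b c d where g_eq: "g = mat2 a b c d" by (rule mat2_cases)
  with g have det: "a*d - b*c = 1" by (simp add: mat2_in_SL2)
  show ?thesis
  proof (cases "c = 0")
    case False then show ?thesis using bruhat det g_eq by simp
  next
    case True
    then have "a \<noteq> 0" using det by auto
    have "g = lower (-1) ** mat2 a b (a+c) (b+d)" using g_eq by (simp add: mat2_mult)
    then have "act g y = act (lower (-1)) (act (mat2 a b (a+c) (b+d)) y)"
      using det by (simp add: act_mult mat2_in_SL2 algebra_simps)
    also have "act (mat2 a b (a+c) (b+d)) y = y"
      by (rule bruhat) (use det True \<open>a \<noteq> 0\<close> in \<open>simp_all add: algebra_simps\<close>)
    finally show ?thesis using fixed by simp
  qed
qed

text \<open>The rotation R with rows p and q satisfies  lower s \<cdot> R = R \<cdot> unip p s , so a point fixed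
  by the unipotent group  unip p  is moved by R to a point fixed by the lower group, which
  is a global fixed point; conjugating back, so is the original point.\<close>

lemma unip_fixed_imp_fixed:
  assumes unit: "norm p = 1" and fixed: "\<forall>s. act (unip p s) x = x" and g: "g \<in> SL2"
  shows "act g x = x"
proof -
  have p_unit: "(p$1)^2 + (p$2)^2 = 1" using unit by (simp add: norm_vec2)
  define R where "R = mat2 (p$1) (p$2) (-p$2) (p$1)"
  define R' where "R' = mat2 (p$1) (-p$2) (p$2) (p$1)"
  have RS: "R \<in> SL2" "R' \<in> SL2" using p_unit by (simp_all add: R_def R'_def mat2_in_SL2 power2_eq_square)
  have R'R: "R' ** R = mat 1"
    using p_unit by (simp add: R_def R'_def mat2_mult mat1_eq_mat2 power2_eq_square algebra_simps)
  define y where "y = act R x"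
  have "act (lower s) y = y" for s
  proof -
    have intertwine: "lower s ** R = R ** unip p s"
      using p_unit unfolding R_def unip_def mat2_mult mat2_eq_iff by algebra
    have "act (lower s) y = act (lower s ** R) x"
      unfolding y_def by (rule act_mult[symmetric]) (simp_all add: mat2_in_SL2 RS)
    also have "\<dots> = act R (act (unip p s) x)"
      unfolding intertwine by (rule act_mult) (simp_all add: RS unip_in_SL2)
    finally show ?thesis using fixed y_def by simp
  qed
  then have fixed_y: "act h y = y" if "h \<in> SL2" for h
    using lower_fixed_imp_fixed that by blast
  have "dist (act g x) x = dist (act (R ** g ** R') y) y"
  proof -
    have "act (R ** g ** R') y = act (R ** g ** R') (act R x)" by (simp add: y_def)
    also have "\<dots> = act ((R ** g ** R') ** R) x"
      by (rule act_mult[symmetric]) (use RS g in \<open>simp_all add: SL2_def det_mul\<close>)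
    also have "(R ** g ** R') ** R = R ** g" by (simp add: matrix_mul_assoc[symmetric] R'R matrix_mul_rid)
    also have "act \<dots> x = act R (act g x)" by (rule act_mult) (use RS g in auto)
    finally show ?thesis using act_dist[OF RS(1)] y_def by simp
  qed
  also have "\<dots> = 0" using fixed_y RS g by (simp add: SL2_def det_mul)
  finally show ?thesis by simp
qed

subsection \<open>Escaping to infinity in the stabilizer\<close>

definition unip_disp :: "real \<Rightarrow> 'x \<Rightarrow> real" where
  "unip_disp t x = dist (act (lower t) x) x + dist (act (upper (-t)) x) x"

lemma tendsto_unip_disp:
  assumes "(T \<longlongrightarrow> 0) F"
  shows "((\<lambda>n. unip_disp (T n) x) \<longlongrightarrow> 0) F"
proof -
  have "((\<lambda>n. unip_disp (T n) x) \<longlongrightarrow> dist (act (lower 0) x) x + dist (act (upper (-0)) x) x) F"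
    unfolding unip_disp_def
    by (intro tendsto_intros tendsto_act)
      (use assms tendsto_minus[OF assms] in \<open>auto simp: mat2_in_SL2 intro!: tendsto_mat2\<close>)
  then show ?thesis by simp
qed

lemma stabilizer_large_element:
  assumes h: "mat2 a b c d \<in> stabilizer act x0"
    and big: "a^2 + b^2 + c^2 + d^2 > 2 * N" and "N \<ge> 0"
  shows "\<exists>p \<rho>. norm p = 1 \<and> \<rho> > N \<and> (\<forall>s. dist (act (unip p s) x0) x0 \<le> unip_disp (s/\<rho>) x0)"
proof -
  let ?h = "mat2 a b c d" and ?h' = "mat2 d (-b) (-c) a"
  have det: "a*d - b*c = 1" and fixed: "act ?h x0 = x0"
    using h by (auto simp: stabilizer_def mat2_in_SL2)
  have conj: "dist (act (unip p s) x0) x0 = dist (act (?h ** unip p s ** ?h') x0) x0" for p s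
    by (rule dist_act_conj[symmetric])
      (use det fixed in \<open>simp_all add: mat2_in_SL2 mat2_mult mat1_eq_mat2 unip_in_SL2 algebra_simps\<close>)
  show ?thesis
  proof (cases "a^2 + b^2 \<ge> c^2 + d^2")
    case True
    define r where "r = a^2 + b^2"
    have "r > N" using True big unfolding r_def by linarith
    then have r: "r > 0" "r > N" using \<open>N \<ge> 0\<close> by linarith+
    have "dist (act (unip (vector [a / sqrt r, b / sqrt r]) s) x0) x0 \<le> unip_disp (s/r) x0" for s
      unfolding conj conj_unip_first_row[OF det r_def r(1)] unip_disp_def by simp
    then show ?thesis using norm_vector_row[OF r_def r(1)] r by blast
  next
    case False
    define r where "r = c^2 + d^2"
    have "r > N" using False big unfolding r_def by linarith
    then have r: "r > 0" "r > N" using \<open>N \<ge> 0\<close> by linarith+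
    have "dist (act (unip (vector [c / sqrt r, d / sqrt r]) s) x0) x0 \<le> unip_disp (s/r) x0" for s
      unfolding conj conj_unip_second_row[OF det r_def r(1)] unip_disp_def by simp
    then show ?thesis using norm_vector_row[OF r_def r(1)] r by blast
  qed
qed

lemma unip_fixed_of_limit:
  assumes P: "P \<longlonglongrightarrow> l" and R: "filterlim R at_top sequentially"
    and bound: "\<And>n s. dist (act (unip (P n) s) x0) x0 \<le> unip_disp (s / R n) x0"
  shows "act (unip l s) x0 = x0"
proof -
  have "(\<lambda>n. dist (act (unip (P n) s) x0) x0) \<longlonglongrightarrow> dist (act (unip l s) x0) x0"
    by (intro tendsto_dist tendsto_const tendsto_act[OF unip_in_SL2 tendsto_unip[OF P] unip_in_SL2])
  moreover have "(\<lambda>n. unip_disp (s / R n) x0) \<longlonglongrightarrow> 0"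
    by (intro tendsto_unip_disp tendsto_divide_0[OF tendsto_const filterlim_at_top_imp_at_infinity[OF R]])
  ultimately have "dist (act (unip l s) x0) x0 \<le> 0"
    by (rule LIMSEQ_le) (use bound in auto)
  then show ?thesis by simp
qed

text \<open>An unbounded stabilizer contains elements of arbitrarily large norm; a convergent
  subsequence of the associated unit directions gives a unipotent group fixing x0.\<close>

lemma unbounded_stabilizer_imp_unip_fixed:
  assumes "\<not> bounded (stabilizer act x0)"
  shows "\<exists>l. norm l = 1 \<and> (\<forall>s. act (unip l s) x0 = x0)"
proof -
  have "\<exists>p \<rho>. norm p = 1 \<and> \<rho> > real n \<and> (\<forall>s. dist (act (unip p s) x0) x0 \<le> unip_disp (s/\<rho>) x0)"
    for n
  proof -
    obtain h where h: "h \<in> stabilizer act x0" "norm h > sqrt (2 * real n)"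
      using assms unfolding bounded_iff by (meson not_le)
    obtain a b c d where h_eq: "h = mat2 a b c d" by (rule mat2_cases)
    have "sqrt (2 * real n) ^ 2 < norm h ^ 2" using h by (intro power_strict_mono) auto
    then have "a^2 + b^2 + c^2 + d^2 > 2 * real n" by (simp add: h_eq norm_mat2)
    then show ?thesis using stabilizer_large_element h h_eq by simp
  qed
  then obtain P :: "nat \<Rightarrow> real^2" and R :: "nat \<Rightarrow> real"
    where P: "\<And>n. P n \<in> sphere 0 1" and R: "\<And>n. R n > real n"
      and bound: "\<And>n s. dist (act (unip (P n) s) x0) x0 \<le> unip_disp (s / R n) x0"
    by (metis mem_sphere_0)
  obtain l r where l: "l \<in> sphere 0 1" and r: "strict_mono r" and lim: "(P \<circ> r) \<longlonglongrightarrow> l"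
    using compact_imp_seq_compact[OF compact_sphere, of 0 1] P by (elim seq_compactE) auto
  have "filterlim (R \<circ> r) at_top sequentially"
  proof (rule filterlim_at_top_mono[OF filterlim_real_sequentially], intro always_eventually allI)
    fix n
    show "real n \<le> (R \<circ> r) n" using seq_suble[OF r, of n] R[of "r n"] by simp
  qed
  then have "act (unip l s) x0 = x0" for s
    by (rule unip_fixed_of_limit[OF lim]) (simp add: bound)
  then show ?thesis using l by auto
qed

end

theorem theorem1p5:
  fixes act :: "real^2^2 \<Rightarrow> 'x::metric_space \<Rightarrow> 'x" and x0 :: 'x
  assumes "continuous_isometric_SL2_action act"
  shows "(\<forall>g\<in>SL2. act g x0 = x0) \<or> compact (stabilizer act x0)"
proof -
  interpret SL2_action act by (rule SL2_action.intro) (rule assms)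
  show ?thesis
  proof (cases "bounded (stabilizer act x0)")
    case True
    then show ?thesis using closed_stabilizer compact_eq_bounded_closed by blast
  next
    case False
    then obtain l where "norm l = 1" "\<forall>s. act (unip l s) x0 = x0"
      using unbounded_stabilizer_imp_unip_fixed by blast
    then show ?thesis using unip_fixed_imp_fixed by blast
  qed
qed

end
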